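(* Let $G$ be a sub-amply regular graph with parameters $(n,k,\lambda,\mu)$ which is not a disjoint union of cliques. Then \[ \lambda + 1 < \max\left\{4\sqrt{2n},\ \frac{6}{\sqrt{13}-1}\sqrt{k(\mu-1)}\right\}. \]
   Context: A graph is sub-amply regular with parameters $(n,k,\lambda,\mu)$ if it has $n$ vertices, is $k$-regular, any two adjacent vertices have exactly $\lambda$ common neighbors, and any two vertices at distance two from each other have at most $\mu$ common neighbors. *)

theory Defs
  imports Complex_Main
begin

definition simple_graph :: "'a set \<Rightarrow> ('a \<Rightarrow> 'a \<Rightarrow> bool) \<Rightarrow> bool" where
  "simple_graph V E \<longleftrightarrow> finite V \<and> (\<forall>x y. E x y \<longrightarrow> x \<in> V \<and> y \<in> V)
     \<and> (\<forall>x y. E x y \<longrightarrow> E y x) \<and> (\<forall>x. \<not> E x x)"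

definition neighbors :: "'a set \<Rightarrow> ('a \<Rightarrow> 'a \<Rightarrow> bool) \<Rightarrow> 'a \<Rightarrow> 'a set" where
  "neighbors V E x = {y \<in> V. E x y}"

definition common_neighbors :: "'a set \<Rightarrow> ('a \<Rightarrow> 'a \<Rightarrow> bool) \<Rightarrow> 'a \<Rightarrow> 'a \<Rightarrow> nat" where
  "common_neighbors V E x y = card (neighbors V E x \<inter> neighbors V E y)"

definition dist_two :: "'a set \<Rightarrow> ('a \<Rightarrow> 'a \<Rightarrow> bool) \<Rightarrow> 'a \<Rightarrow> 'a \<Rightarrow> bool" where
  "dist_two V E x y \<longleftrightarrow> x \<in> V \<and> y \<in> V \<and> x \<noteq> y \<and> \<not> E x y
     \<and> (\<exists>z \<in> V. E x z \<and> E z y)"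

definition sub_amply_regular ::
  "'a set \<Rightarrow> ('a \<Rightarrow> 'a \<Rightarrow> bool) \<Rightarrow> nat \<Rightarrow> nat \<Rightarrow> nat \<Rightarrow> nat \<Rightarrow> bool" where
  "sub_amply_regular V E n k lam mu \<longleftrightarrow> simple_graph V E \<and> card V = n
     \<and> (\<forall>x \<in> V. card (neighbors V E x) = k)
     \<and> (\<forall>x y. E x y \<longrightarrow> common_neighbors V E x y = lam)
     \<and> (\<forall>x y. dist_two V E x y \<longrightarrow> common_neighbors V E x y \<le> mu)"

definition disjoint_union_of_cliques :: "'a set \<Rightarrow> ('a \<Rightarrow> 'a \<Rightarrow> bool) \<Rightarrow> bool" where
  "disjoint_union_of_cliques V E \<longleftrightarrow> (\<exists>P. (\<forall>B \<in> P. B \<noteq> {}) \<and> \<Union>P = V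
     \<and> (\<forall>B \<in> P. \<forall>C \<in> P. B \<noteq> C \<longrightarrow> B \<inter> C = {})
     \<and> (\<forall>x \<in> V. \<forall>y \<in> V. x \<noteq> y \<longrightarrow> (E x y \<longleftrightarrow> (\<exists>B \<in> P. x \<in> B \<and> y \<in> B))))"

end

theory Submission
  imports Defs
begin

text \<open>Write \<open>l = \<lambda> + 1\<close>, \<open>m = \<mu> - 1\<close> and \<open>K = m (k - l)\<close>. For a triangle \<open>v x y\<close> let its
  defect be the number of common neighbours of \<open>v\<close> and \<open>x\<close>, other than \<open>y\<close>, that are not
  adjacent to \<open>y\<close>. Counting the non-adjacent pairs inside \<open>N(v) \<inter> N(x)\<close> through the neighbours
  of \<open>v\<close> outside \<open>N(x)\<close> bounds the total defect by \<open>K\<close>, which forces \<open>f (l - m - f) \<le> K\<close> for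
  every defect \<open>f\<close>. If the theorem failed, then \<open>5 k m \<le> l\<^sup>2\<close>, hence \<open>9 K < 2 (l - m)\<^sup>2\<close>, so
  every defect is either below \<open>(l - m)/3\<close> ("strong" triangles) or above \<open>2 (l - m)/3\<close>.
  Strong triangles at \<open>v\<close> then partition \<open>N(v)\<close> into cliques of size at least \<open>7 l / 10\<close>,
  and two non-adjacent vertices have at most one common neighbour per pair of their clusters.
  Counting the edges between \<open>N(z)\<close> and the vertices at distance two from \<open>z\<close> gives
  \<open>k (k - l) (7 l / 10)\<^sup>2 \<le> n k\<^sup>2\<close>, which contradicts \<open>32 n \<le> l\<^sup>2\<close> because \<open>k \<ge> 2 l - m\<close>.\<close>

lemma card_split_point:
  assumes "finite A" "a \<in> A" "a \<notin> X"
  shows "card A = Suc (card (A \<inter> X) + card (A - {a} - X))"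
proof -
  have "A = insert a (A \<inter> X \<union> (A - {a} - X))" using assms(2) by auto
  also have "card \<dots> = Suc (card (A \<inter> X \<union> (A - {a} - X)))"
    using assms by (intro card_insert_disjoint) auto
  also have "card (A \<inter> X \<union> (A - {a} - X)) = card (A \<inter> X) + card (A - {a} - X)"
    using assms(1) by (intro card_Un_disjoint) auto
  finally show ?thesis .
qed

lemma Suc_card_le_card_if_insert_subset:
  assumes "finite B" "insert a A \<subseteq> B" "a \<notin> A"
  shows "Suc (card A) \<le> card B"
proof -
  have "finite (insert a A)" using assms(1,2) by (rule rev_finite_subset)
  then have "card (insert a A) = Suc (card A)" using assms(3) by simp
  then show ?thesis using card_mono[OF assms(1,2)] by simp
qed

lemma disjoint_union_of_cliques_if_no_induced_path:
  assumes sym: "\<And>x y. E x y \<Longrightarrow> E y x"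
    and closed: "\<And>z x y. E z x \<Longrightarrow> E z y \<Longrightarrow> x \<noteq> y \<Longrightarrow> E x y"
  shows "disjoint_union_of_cliques V E"
proof -
  define R where "R u v \<longleftrightarrow> u = v \<or> E u v" for u v
  have R_sym: "R u v \<Longrightarrow> R v u" for u v unfolding R_def using sym by blast
  have R_trans: "R u v \<Longrightarrow> R v w \<Longrightarrow> R u w" for u v w unfolding R_def using closed sym by blast
  define block where "block z = {y \<in> V. R z y}" for z
  show ?thesis
    unfolding disjoint_union_of_cliques_def
  proof (intro exI[of _ "block ` V"] conjI ballI impI)
    fix B assume "B \<in> block ` V"
    then show "B \<noteq> {}" unfolding block_def R_def by auto
  next
    show "\<Union> (block ` V) = V" unfolding block_def R_def by auto
  next
    fix B C assume B: "B \<in> block ` V" and C: "C \<in> block ` V" and "B \<noteq> C"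
    obtain a b where ab: "B = block a" "C = block b" using B C by auto
    show "B \<inter> C = {}"
    proof (rule ccontr)
      assume "B \<inter> C \<noteq> {}"
      then obtain y where "R a y" "R b y" unfolding ab block_def by auto
      then have "block a = block b" unfolding block_def using R_sym R_trans by blast
      with \<open>B \<noteq> C\<close> ab show False by simp
    qed
  next
    fix x y assume "x \<in> V" "y \<in> V" "x \<noteq> y"
    show "E x y \<longleftrightarrow> (\<exists>B\<in>block ` V. x \<in> B \<and> y \<in> B)"
    proof
      assume "E x y"
      then show "\<exists>B\<in>block ` V. x \<in> B \<and> y \<in> B"
        using \<open>x \<in> V\<close> \<open>y \<in> V\<close> unfolding block_def R_def by auto
    next
      assume "\<exists>B\<in>block ` V. x \<in> B \<and> y \<in> B"
      then obtain z where "R z x" "R z y" unfolding block_def by auto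
      then have "R x y" using R_sym R_trans by blast
      then show "E x y" using \<open>x \<noteq> y\<close> unfolding R_def by simp
    qed
  qed
qed

lemma sq_le_if_four_sqrt_le:
  fixes x y :: real
  assumes "4 * sqrt (2 * x) \<le> y" and "0 \<le> x"
  shows "32 * x \<le> y\<^sup>2"
proof -
  have "(4 * sqrt (2 * x))\<^sup>2 \<le> y\<^sup>2" using assms by (intro power_mono) auto
  then show ?thesis using assms(2) by (simp add: power_mult_distrib)
qed

lemma sq_le_if_sqrt13_bound:
  fixes x y :: real
  assumes "6 / (sqrt 13 - 1) * sqrt x \<le> y"
  shows "5 * x \<le> y\<^sup>2"
proof (cases "0 \<le> x")
  case True
  define r where "r = sqrt 13 - 1"
  have sqrt13: "3.4 < sqrt 13" by (rule real_less_rsqrt) (simp add: power2_eq_square)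
  then have "2.4 < r" unfolding r_def by simp
  then have "6 * sqrt x \<le> y * r" using assms unfolding r_def by (simp add: field_simps)
  then have "(6 * sqrt x)\<^sup>2 \<le> (y * r)\<^sup>2" by (intro power_mono) (use True in simp_all)
  then have "36 * x \<le> y\<^sup>2 * r\<^sup>2" using True by (simp add: power_mult_distrib)
  moreover have "r\<^sup>2 = 14 - 2 * sqrt 13" unfolding r_def by (simp add: power2_eq_square algebra_simps)
  then have "y\<^sup>2 * r\<^sup>2 \<le> y\<^sup>2 * 7.2" using sqrt13 by (intro mult_left_mono) simp_all
  ultimately show ?thesis by simp
next
  case False
  then show ?thesis by (smt (verit) zero_le_power2)
qed

locale sub_amply_regular_graph =
  fixes V :: "'a set" and E :: "'a \<Rightarrow> 'a \<Rightarrow> bool" and k lam mu :: nat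
  assumes finite_V: "finite V"
    and sym: "E x y \<Longrightarrow> E y x"
    and irrefl [simp]: "\<not> E x x"
    and edge_in_V: "E x y \<Longrightarrow> x \<in> V"
    and degree: "x \<in> V \<Longrightarrow> card (neighbors V E x) = k"
    and lambda: "E x y \<Longrightarrow> card (neighbors V E x \<inter> neighbors V E y) = lam"
    and mu: "dist_two V E x y \<Longrightarrow> card (neighbors V E x \<inter> neighbors V E y) \<le> mu"

lemma sub_amply_regular_graphI:
  assumes "sub_amply_regular V E n k lam mu"
  shows "sub_amply_regular_graph V E k lam mu"
proof unfold_locales
  note G = assms[unfolded sub_amply_regular_def simple_graph_def common_neighbors_def]
  fix x y
  show "finite V" using G by blast
  show "E x y \<Longrightarrow> E y x" using G by blast
  show "\<not> E x x" using G by blast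
  show "E x y \<Longrightarrow> x \<in> V" using G by blast
  show "x \<in> V \<Longrightarrow> card (neighbors V E x) = k" using G by blast
  show "E x y \<Longrightarrow> card (neighbors V E x \<inter> neighbors V E y) = lam" using G by blast
  show "dist_two V E x y \<Longrightarrow> card (neighbors V E x \<inter> neighbors V E y) \<le> mu" using G by blast
qed

context sub_amply_regular_graph
begin

abbreviation N :: "'a \<Rightarrow> 'a set" where "N x \<equiv> neighbors V E x"

lemma in_N_iff [simp]: "y \<in> N x \<longleftrightarrow> E x y"
  using edge_in_V sym unfolding neighbors_def by blast

lemma N_subset_V: "N x \<subseteq> V"
  unfolding neighbors_def by auto

lemma finite_N [simp]: "finite (N x)"
  using N_subset_V finite_V by (rule finite_subset)

lemma degree_edge: "E x y \<Longrightarrow> card (N x) = k"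
  using degree edge_in_V by blast

lemma card_common_le_mu:
  assumes "E x z" "E z y" "x \<noteq> y" "\<not> E x y"
  shows "card (N x \<inter> N y) \<le> mu"
proof (rule mu)
  have "x \<in> V" "z \<in> V" "y \<in> V"
    using edge_in_V[OF assms(1)] edge_in_V[OF assms(2)] edge_in_V[OF sym[OF assms(2)]] .
  with assms show "dist_two V E x y" unfolding dist_two_def by blast
qed

definition l :: real where "l = real lam + 1"
definition m :: real where "m = real mu - 1"
definition K :: real where "K = m * (real k - l)"

text \<open>For a triangle \<open>v x y\<close>, \<open>defect v x y\<close> counts the common neighbours of \<open>v\<close> and \<open>x\<close>,
  other than \<open>y\<close>, that are not adjacent to \<open>y\<close> (lemma \<open>defect_eq_card\<close>).\<close>
definition defect :: "'a \<Rightarrow> 'a \<Rightarrow> 'a \<Rightarrow> real" where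
  "defect v x y = real lam - 1 - real (card (N v \<inter> N x \<inter> N y))"

lemma defect_commute: "defect v x y = defect v y x" "defect v x y = defect x v y"
  unfolding defect_def by (simp_all add: Int_ac)

lemma degree_split:
  assumes "E v x"
  shows "k = Suc (lam + card (N v - {x} - N x))"
  using card_split_point[of "N v" x "N x"] degree_edge[OF assms] lambda[OF assms] assms by simp

lemma l_le_k: "E v x \<Longrightarrow> l \<le> real k"
  using degree_split by (simp add: l_def)

lemma defect_eq_card:
  assumes "E v x" "a \<in> N v \<inter> N x"
  shows "defect v x a = real (card (N v \<inter> N x - {a} - N a))"
  unfolding defect_def
  using card_split_point[of "N v \<inter> N x" a "N a"] lambda[OF assms(1)] assms(2) by simp

lemma card_nonneighbours_eq:
  assumes "E v x" "a \<in> N v \<inter> N x"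
  shows "card (N v \<inter> N x - {a} - N a) = card {b \<in> N v - {x} - N x. E a b}"
proof -
  have "E a v" "E a x" using assms(2) by (auto intro: sym)
  have "lam = Suc (card (N v \<inter> N x \<inter> N a) + card (N v \<inter> N x - {a} - N a))"
    using card_split_point[of "N v \<inter> N x" a "N a"] lambda[OF assms(1)] assms(2) by simp
  moreover have "lam = Suc (card (N a \<inter> N v \<inter> N x) + card (N a \<inter> N v - {x} - N x))"
    using card_split_point[of "N a \<inter> N v" x "N x"] lambda[OF \<open>E a v\<close>] \<open>E a x\<close> assms(1) by simp
  moreover have "N a \<inter> N v \<inter> N x = N v \<inter> N x \<inter> N a" by blast
  moreover have "N a \<inter> N v - {x} - N x = {b \<in> N v - {x} - N x. E a b}" by auto
  ultimately show ?thesis by simp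
qed

lemma card_back_neighbours_le:
  assumes "E v x" "b \<in> N v - {x} - N x"
  shows "card {a \<in> N v \<inter> N x. E a b} + 1 \<le> mu"
proof -
  have "Suc (card {a \<in> N v \<inter> N x. E a b}) \<le> card (N b \<inter> N x)"
    by (rule Suc_card_le_card_if_insert_subset[where a = v]) (use assms in \<open>auto intro: sym\<close>)
  also have "\<dots> \<le> mu"
    by (rule card_common_le_mu[of b v x]) (use assms in \<open>auto intro: sym\<close>)
  finally show ?thesis by simp
qed

lemma sum_defect_le:
  assumes "E v x" "W \<subseteq> N v \<inter> N x"
  shows "(\<Sum>a\<in>W. defect v x a) \<le> K"
proof -
  define A B where "A = N v \<inter> N x" and "B = N v - {x} - N x"
  have "(\<Sum>a\<in>W. defect v x a) \<le> (\<Sum>a\<in>A. defect v x a)"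
    using assms by (intro sum_mono2) (auto simp: A_def defect_eq_card)
  also have "\<dots> = (\<Sum>a\<in>A. real (card {b\<in>B. E a b}))"
    using assms(1) by (intro sum.cong) (auto simp: A_def B_def defect_eq_card card_nonneighbours_eq)
  also have "\<dots> = (\<Sum>b\<in>B. real (card {a\<in>A. E a b}))"
    \<comment> \<open>double counting the edges between \<open>A\<close> and \<open>B\<close>; each \<open>b \<in> B\<close> has at most \<open>\<mu> - 1\<close>
      neighbours in \<open>A\<close>, as \<open>v\<close> is one more common neighbour of \<open>b\<close> and \<open>x\<close>\<close>
    using sum_multicount_gen[of A B "\<lambda>a b. E a b" "\<lambda>b. card {a\<in>A. E a b}"]
    by (simp add: A_def B_def flip: of_nat_sum)
  also have "\<dots> \<le> real (card B) * m"
  proof (rule sum_bounded_above)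
    fix b assume "b \<in> B"
    then have "real (card {a\<in>A. E a b} + 1) \<le> real mu"
      using card_back_neighbours_le[OF assms(1)] unfolding A_def B_def by (simp only: of_nat_le_iff)
    then show "real (card {a\<in>A. E a b}) \<le> m" by (simp add: m_def)
  qed
  also have "\<dots> = K" unfolding K_def l_def B_def using degree_split[OF assms(1)] by simp
  finally show ?thesis .
qed

lemma defect_lower_bound:
  assumes vx: "E v x" and vy: "E v y" and xy: "E x y" and q: "q \<in> N v \<inter> N x - {y} - N y"
  shows "l - m - defect v x y \<le> defect v x q"
proof -
  define A where "A = N v \<inter> N x"
  have "E q v" "E q x" "\<not> E q y" using q by (auto intro: sym)
  have "Suc (card (A \<inter> N y - N q)) \<le> card (A - {q} - N q)"
    by (rule Suc_card_le_card_if_insert_subset[where a = y]) (use vy xy q in \<open>auto simp: A_def intro: sym\<close>)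
  moreover have "Suc (card (insert x (A \<inter> N y \<inter> N q))) \<le> card (N q \<inter> N y)"
    by (rule Suc_card_le_card_if_insert_subset[where a = v]) (use vx vy xy q in \<open>auto simp: A_def intro: sym\<close>)
  moreover have "card (insert x (A \<inter> N y \<inter> N q)) = Suc (card (A \<inter> N y \<inter> N q))"
    by (simp add: A_def)
  moreover have "card (N q \<inter> N y) \<le> mu"
    by (rule card_common_le_mu[of q v y]) (use \<open>E q v\<close> \<open>\<not> E q y\<close> vy q in auto)
  moreover have "card (A \<inter> N y) = card (A \<inter> N y \<inter> N q) + card (A \<inter> N y - N q)"
    by (rule card_Int_Diff) (simp add: A_def)
  ultimately have "card (A \<inter> N y) + 3 \<le> card (A - {q} - N q) + mu" by linarith
  then have "real (card (A \<inter> N y)) + 3 \<le> real (card (A - {q} - N q)) + real mu" by linarith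
  moreover have "defect v x q = real (card (A - {q} - N q))"
    using defect_eq_card[OF vx] q unfolding A_def by simp
  ultimately show ?thesis unfolding defect_def l_def m_def A_def by simp
qed

lemma defect_mul_le:
  assumes vx: "E v x" and vy: "E v y" and xy: "E x y"
  shows "defect v x y * (l - m - defect v x y) \<le> K"
proof -
  define F where "F = N v \<inter> N x - {y} - N y"
  have "defect v x y = real (card F)" using defect_eq_card[OF vx] vy xy unfolding F_def by simp
  then have "defect v x y * (l - m - defect v x y) = (\<Sum>q\<in>F. l - m - defect v x y)" by simp
  also have "\<dots> \<le> (\<Sum>q\<in>F. defect v x q)"
    by (rule sum_mono) (use defect_lower_bound[OF vx vy xy] in \<open>simp add: F_def\<close>)
  also have "\<dots> \<le> K" by (rule sum_defect_le[OF vx]) (auto simp: F_def)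
  finally show ?thesis .
qed

lemma induced_path_bounds:
  assumes zx: "E z x" and zy: "E z y" and "x \<noteq> y" "\<not> E x y"
  shows "2 * l - m \<le> real k" and "0 \<le> m"
proof -
  define I where "I = N z \<inter> N y \<inter> N x"
  have "Suc (card I) \<le> card (N x \<inter> N y)"
    by (rule Suc_card_le_card_if_insert_subset[where a = z]) (use zx zy in \<open>auto simp: I_def intro: sym\<close>)
  moreover have "card (N x \<inter> N y) \<le> mu"
    by (rule card_common_le_mu[of x z y]) (use assms in \<open>auto intro: sym\<close>)
  moreover have "Suc (card (N z \<inter> N y - N x)) \<le> card (N z - {x} - N x)"
    by (rule Suc_card_le_card_if_insert_subset[where a = y]) (use assms in \<open>auto intro: sym\<close>)
  moreover have "card (N z \<inter> N y) = card I + card (N z \<inter> N y - N x)"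
    unfolding I_def by (rule card_Int_Diff) simp
  moreover have "card (N z \<inter> N y) = lam" using lambda[OF zy] .
  moreover have "k = Suc (lam + card (N z - {x} - N x))" by (rule degree_split[OF zx])
  ultimately have "2 * lam + 3 \<le> k + mu" and "1 \<le> mu" by linarith+
  then show "2 * l - m \<le> real k" and "0 \<le> m" unfolding l_def m_def by simp_all
qed

definition cluster_lb :: real where "cluster_lb = l - 3 * K / (2 * (l - m))"

lemma gap_if_lambda_large:
  assumes "5 * (real k * m) \<le> l\<^sup>2" "l \<le> real k" "0 \<le> m"
  shows "5 * m \<le> l" "9 * K < 2 * (l - m)\<^sup>2" "7/10 * l \<le> cluster_lb"
proof -
  have "1 \<le> l" by (simp add: l_def)
  have "l * m \<le> real k * m" using assms(2,3) by (rule mult_right_mono)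
  then have "5 * m * l \<le> l * l" using assms(1) by (simp add: power2_eq_square algebra_simps)
  then show m5: "5 * m \<le> l" using \<open>1 \<le> l\<close> by simp
  have K: "5 * K \<le> l\<^sup>2 - 5 * (l * m)" using assms(1) by (simp add: K_def algebra_simps)
  have "0 \<le> l * m" using \<open>1 \<le> l\<close> assms(3) by simp
  moreover have "(l - m)\<^sup>2 = l\<^sup>2 - 2 * (l * m) + m\<^sup>2" by (simp add: power2_eq_square algebra_simps)
  moreover have "0 < l\<^sup>2" using \<open>1 \<le> l\<close> by simp
  ultimately show "9 * K < 2 * (l - m)\<^sup>2" using K by (smt (verit) zero_le_power2)
  have "3 * K \<le> 3/5 * (l * (l - m))"
    using K \<open>0 \<le> l * m\<close> by (simp add: power2_eq_square algebra_simps)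
  then have "3 * K / (2 * (l - m)) \<le> 3/10 * l"
    using m5 assms(3) \<open>1 \<le> l\<close> by (simp add: divide_le_eq algebra_simps)
  then show "7/10 * l \<le> cluster_lb" unfolding cluster_lb_def by simp
qed

end

locale sub_amply_regular_gap = sub_amply_regular_graph +
  assumes m_less_l: "m < l" and gap: "9 * K < 2 * (l - m)\<^sup>2"
begin

definition strong :: "'a \<Rightarrow> 'a \<Rightarrow> 'a \<Rightarrow> bool" where
  "strong v x y \<longleftrightarrow> 3 * defect v x y < l - m"

lemma defect_dichotomy:
  assumes "E v x" "E v y" "E x y"
  shows "strong v x y \<or> 2 * (l - m) < 3 * defect v x y"
proof (rule ccontr)
  assume "\<not> ?thesis"
  then have "0 \<le> (3 * defect v x y - (l - m)) * (2 * (l - m) - 3 * defect v x y)"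
    unfolding strong_def by (intro mult_nonneg_nonneg) auto
  also have "\<dots> = 9 * (defect v x y * (l - m - defect v x y)) - 2 * (l - m)\<^sup>2"
    by (simp add: algebra_simps power2_eq_square)
  finally show False using defect_mul_le[OF assms] gap by linarith
qed

lemma strong_path_adjacent:
  assumes va: "E v a" and vb: "E v b" and vc: "E v c" and ab: "E a b" and bc: "E b c"
    and "a \<noteq> c" and "strong v a b" and "strong v b c"
  shows "E a c"
proof (rule ccontr)
  assume "\<not> E a c"
  \<comment> \<open>then \<open>a, c\<close> lie in \<open>N(v) \<inter> N(b)\<close> outside \<open>X \<union> Y\<close>, and \<open>v, b\<close> are common neighbours of \<open>a, c\<close>
    outside \<open>X \<inter> Y\<close>, so the two defects add up to at least \<open>l - m\<close>\<close>
  define X Y where "X = N v \<inter> N a \<inter> N b" and "Y = N v \<inter> N b \<inter> N c"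
  have "Suc (card (insert c (X \<union> Y))) \<le> card (N v \<inter> N b)"
    by (rule Suc_card_le_card_if_insert_subset[where a = a])
      (use assms \<open>\<not> E a c\<close> in \<open>auto simp: X_def Y_def intro: sym\<close>)
  moreover have "card (insert c (X \<union> Y)) = Suc (card (X \<union> Y))"
    using \<open>\<not> E a c\<close> by (simp add: X_def Y_def)
  moreover have "Suc (card (insert b (X \<inter> Y))) \<le> card (N a \<inter> N c)"
    by (rule Suc_card_le_card_if_insert_subset[where a = v]) (use assms in \<open>auto simp: X_def Y_def intro: sym\<close>)
  moreover have "card (insert b (X \<inter> Y)) = Suc (card (X \<inter> Y))"
    by (simp add: X_def Y_def)
  moreover have "card (N a \<inter> N c) \<le> mu"
    by (rule card_common_le_mu[of a b c]) (use assms \<open>\<not> E a c\<close> in auto)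
  moreover have "card X + card Y = card (X \<union> Y) + card (X \<inter> Y)"
    by (rule card_Un_Int) (simp_all add: X_def Y_def)
  moreover have "card (N v \<inter> N b) = lam" using lambda[OF vb] .
  ultimately have "card X + card Y + 4 \<le> lam + mu" by linarith
  then have "l - m \<le> defect v a b + defect v b c"
    unfolding defect_def l_def m_def X_def Y_def by linarith
  with \<open>strong v a b\<close> \<open>strong v b c\<close> m_less_l show False unfolding strong_def by linarith
qed

lemma strong_trans:
  assumes va: "E v a" and vb: "E v b" and vc: "E v c" and ab: "E a b" and bc: "E b c"
    and ac: "E a c" and "strong v a b" and "strong v b c"
  shows "strong v a c"
proof -
  define X Y where "X = N v \<inter> N a \<inter> N b" and "Y = N v \<inter> N b \<inter> N c"
  have "Suc (card (X \<inter> Y)) \<le> card (N v \<inter> N a \<inter> N c)"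
    by (rule Suc_card_le_card_if_insert_subset[where a = b]) (use assms in \<open>auto simp: X_def Y_def intro: sym\<close>)
  moreover have "card (X \<union> Y) \<le> card (N v \<inter> N b)"
    by (rule card_mono) (auto simp: X_def Y_def)
  moreover have "card X + card Y = card (X \<union> Y) + card (X \<inter> Y)"
    by (rule card_Un_Int) (simp_all add: X_def Y_def)
  moreover have "card (N v \<inter> N b) = lam" using lambda[OF vb] .
  ultimately have "card X + card Y + 1 \<le> lam + card (N v \<inter> N a \<inter> N c)" by linarith
  then have "defect v a c \<le> defect v a b + defect v b c"
    unfolding defect_def X_def Y_def by linarith
  then have "3 * defect v a c \<le> 2 * (l - m)"
    using \<open>strong v a b\<close> \<open>strong v b c\<close> unfolding strong_def by (smt (verit))
  then show ?thesis using defect_dichotomy[OF va vc ac] by linarith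
qed

definition cluster :: "'a \<Rightarrow> 'a \<Rightarrow> 'a set" where
  "cluster v u = {y. y = u \<or> E u y \<and> E v y \<and> strong v u y}"

lemma cluster_subset: "E v u \<Longrightarrow> cluster v u \<subseteq> N v"
  unfolding cluster_def by auto

lemma finite_cluster: "E v u \<Longrightarrow> finite (cluster v u)"
  using cluster_subset finite_N by (rule finite_subset)

lemma cluster_sym:
  assumes "E v u" "y \<in> cluster v u"
  shows "u \<in> cluster v y"
  using assms defect_commute(1)[of v u y] unfolding cluster_def strong_def by (auto intro: sym)

lemma cluster_trans:
  assumes va: "E v a" and "b \<in> cluster v a" and "c \<in> cluster v b"
  shows "c \<in> cluster v a"
proof (cases "b = a \<or> c = b \<or> c = a")
  case True
  with assms show ?thesis unfolding cluster_def by auto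
next
  case False
  with assms have "E a b" "E v b" "strong v a b" "E b c" "E v c" "strong v b c"
    unfolding cluster_def by auto
  moreover from this False have "E a c"
    using strong_path_adjacent[OF va] by blast
  ultimately have "strong v a c" and "E a c" and "E v c"
    using strong_trans[OF va] by blast+
  then show ?thesis unfolding cluster_def by simp
qed

lemma cluster_eq:
  assumes "E v u" "y \<in> cluster v u"
  shows "cluster v y = cluster v u"
proof -
  have "E v y" using assms unfolding cluster_def by auto
  show ?thesis
    using cluster_trans[OF assms] cluster_trans[OF \<open>E v y\<close> cluster_sym[OF assms]] by blast
qed

lemma card_cluster_ge:
  assumes vu: "E v u"
  shows "cluster_lb \<le> real (card (cluster v u))"
proof -
  define A where "A = N v \<inter> N u"
  define W where "W = {a \<in> A. \<not> strong v u a}"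
  have "W \<subseteq> A" by (auto simp: W_def)
  have "real (card W) * (2 * (l - m) / 3) \<le> (\<Sum>a\<in>W. defect v u a)"
  proof (rule sum_bounded_below)
    fix a assume "a \<in> W"
    then have "E v a" "E u a" "\<not> strong v u a" by (auto simp: W_def A_def)
    then show "2 * (l - m) / 3 \<le> defect v u a" using defect_dichotomy[OF vu] by fastforce
  qed
  also have "\<dots> \<le> K" by (rule sum_defect_le[OF vu]) (auto simp: W_def A_def)
  finally have "real (card W) \<le> 3 * K / (2 * (l - m))"
    using m_less_l by (simp add: field_simps)
  moreover have "Suc (card (A - W)) \<le> card (cluster v u)"
    by (rule Suc_card_le_card_if_insert_subset[where a = u])
      (use finite_cluster[OF vu] in \<open>auto simp: W_def A_def cluster_def\<close>)
  moreover have "card A = card W + card (A - W)"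
    using card_Int_Diff[of A W] \<open>W \<subseteq> A\<close> by (simp add: A_def Int_absorb1)
  moreover have "card A = lam" unfolding A_def using lambda[OF vu] .
  ultimately show ?thesis unfolding cluster_lb_def l_def by linarith
qed

lemma card_clusters_mult_le:
  assumes "v \<in> V"
  shows "real (card (cluster v ` N v)) * cluster_lb \<le> real k"
proof -
  define F where "F = cluster v ` N v"
  have disjoint: "pairwise disjnt F"
  proof (rule pairwiseI)
    fix C D assume "C \<in> F" "D \<in> F" "C \<noteq> D"
    then obtain u w where "E v u" "E v w" and C: "C = cluster v u" and D: "D = cluster v w"
      unfolding F_def by (metis imageE in_N_iff)
    then have "cluster v y = C" "cluster v y = D" if "y \<in> C" "y \<in> D" for y
      using that cluster_eq by blast+
    then show "disjnt C D" using \<open>C \<noteq> D\<close> unfolding disjnt_def by blast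
  qed
  have finite: "finite C" if "C \<in> F" for C
    using that finite_cluster by (auto simp: F_def)
  have "sum card F = card (\<Union> F)" using card_Union_disjoint[OF disjoint finite] by simp
  also have "\<dots> \<le> card (N v)"
    by (rule card_mono) (simp_all add: F_def UN_subset_iff cluster_subset)
  also have "\<dots> = k" using degree[OF assms] .
  finally have "(\<Sum>C\<in>F. real (card C)) \<le> real k" by (simp flip: of_nat_sum)
  moreover have "real (card F) * cluster_lb \<le> (\<Sum>C\<in>F. real (card C))"
    by (rule sum_bounded_below) (auto simp: F_def card_cluster_ge)
  ultimately show ?thesis unfolding F_def by simp
qed

text \<open>Two common neighbours of non-adjacent \<open>z\<close> and \<open>w\<close> lying in the same cluster of \<open>z\<close> and
  in the same cluster of \<open>w\<close> would put \<open>w\<close> into the cluster of \<open>z\<close> in their own neighbourhood.\<close>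
lemma card_common_neighbours_le_clusters:
  assumes "z \<noteq> w" "\<not> E z w"
  shows "card (N z \<inter> N w) \<le> card (cluster z ` N z) * card (cluster w ` N w)"
proof -
  define h where "h t = (cluster z t, cluster w t)" for t
  have "inj_on h (N z \<inter> N w)"
  proof (rule inj_onI)
    fix t t' assume t: "t \<in> N z \<inter> N w" and t': "t' \<in> N z \<inter> N w" and "h t = h t'"
    then have "t' \<in> cluster z t" "t' \<in> cluster w t" unfolding h_def cluster_def by auto
    show "t = t'"
    proof (rule ccontr)
      assume "t \<noteq> t'"
      then have "E t t'" "strong z t t'" "strong w t t'"
        using \<open>t' \<in> cluster z t\<close> \<open>t' \<in> cluster w t\<close> unfolding cluster_def by auto
      then have "t' \<in> cluster t z" "w \<in> cluster t t'"
        using t t' defect_commute[of z t t'] defect_commute[of w t t'] defect_commute[of t w t']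
        unfolding cluster_def strong_def by (auto intro: sym)
      then have "w \<in> cluster t z" using t by (auto intro: cluster_trans sym)
      then show False using assms unfolding cluster_def by auto
    qed
  qed
  moreover have "h ` (N z \<inter> N w) \<subseteq> cluster z ` N z \<times> cluster w ` N w"
    by (auto simp: h_def)
  ultimately have "card (N z \<inter> N w) \<le> card (cluster z ` N z \<times> cluster w ` N w)"
    by (intro card_inj_on_le) simp_all
  then show ?thesis by (simp add: card_cartesian_product)
qed

lemma count_second_neighbourhood:
  assumes "z \<in> V" "0 < cluster_lb"
  shows "real k * (real k - l) * cluster_lb\<^sup>2 \<le> real (card (V - {z} - N z)) * (real k)\<^sup>2"
proof -
  define D where "D = V - {z} - N z"
  have out: "real (card {w\<in>D. E t w}) = real k - l" if "t \<in> N z" for t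
  proof -
    have "E t z" using that by (auto intro: sym)
    have "N t - {z} - N z = {w\<in>D. E t w}" using N_subset_V by (auto simp: D_def)
    then show ?thesis
      using card_split_point[of "N t" z "N z"] degree_split[OF \<open>E t z\<close>] \<open>E t z\<close>
      unfolding l_def by simp
  qed
  have into: "real (card {t\<in>N z. E t w}) * cluster_lb\<^sup>2 \<le> (real k)\<^sup>2" if "w \<in> D" for w
  proof -
    have "w \<in> V" "z \<noteq> w" "\<not> E z w" using that by (auto simp: D_def)
    have "{t\<in>N z. E t w} = N z \<inter> N w" by (auto intro: sym)
    then have "card {t\<in>N z. E t w} \<le> card (cluster z ` N z) * card (cluster w ` N w)"
      using card_common_neighbours_le_clusters[OF \<open>z \<noteq> w\<close> \<open>\<not> E z w\<close>] by simp
    then have "real (card {t\<in>N z. E t w}) * cluster_lb\<^sup>2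
        \<le> real (card (cluster z ` N z) * card (cluster w ` N w)) * cluster_lb\<^sup>2"
      by (intro mult_right_mono) (simp_all only: of_nat_le_iff zero_le_power2)
    also have "\<dots> = (real (card (cluster z ` N z)) * cluster_lb) * (real (card (cluster w ` N w)) * cluster_lb)"
      by (simp add: power2_eq_square algebra_simps)
    also have "\<dots> \<le> real k * real k"
      using assms by (intro mult_mono card_clusters_mult_le \<open>w \<in> V\<close>) simp_all
    finally show ?thesis by (simp add: power2_eq_square)
  qed
  have "real k * (real k - l) = (\<Sum>t\<in>N z. real (card {w\<in>D. E t w}))"
    using out degree[OF assms(1)] by simp
  also have "\<dots> = (\<Sum>w\<in>D. real (card {t\<in>N z. E t w}))"
    using sum_multicount_gen[of "N z" D "\<lambda>t w. E t w" "\<lambda>w. card {t\<in>N z. E t w}"] finite_V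
    by (simp add: D_def flip: of_nat_sum)
  finally have "real k * (real k - l) * cluster_lb\<^sup>2 = (\<Sum>w\<in>D. real (card {t\<in>N z. E t w}) * cluster_lb\<^sup>2)"
    by (simp add: sum_distrib_right)
  also have "\<dots> \<le> (\<Sum>w\<in>D. (real k)\<^sup>2)" by (rule sum_mono) (rule into)
  finally show ?thesis by (simp add: D_def)
qed


lemma card_V_bound:
  assumes "z \<in> V" and "l \<le> real k" and "0 < c" and "c \<le> cluster_lb"
  shows "(real k - l) * c\<^sup>2 \<le> real (card V) * real k"
proof -
  define D where "D = card (V - {z} - N z)"
  have "card V = Suc (k + D)"
    using card_split_point[of V z "N z"] finite_V assms(1) degree[OF assms(1)] N_subset_V
    by (simp add: D_def Int_absorb1)
  have "0 < real k" using assms(2) by (simp add: l_def)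
  have "0 < cluster_lb" using assms(3,4) by linarith
  then have "real k * ((real k - l) * cluster_lb\<^sup>2) \<le> real k * (real D * real k)"
    using count_second_neighbourhood[OF assms(1)] by (simp add: D_def power2_eq_square algebra_simps)
  then have "(real k - l) * cluster_lb\<^sup>2 \<le> real D * real k" using \<open>0 < real k\<close> by simp
  moreover have "(real k - l) * c\<^sup>2 \<le> (real k - l) * cluster_lb\<^sup>2"
    using assms(2-4) by (intro mult_left_mono power_mono) simp_all
  moreover have "real D * real k \<le> real (card V) * real k"
    using \<open>card V = Suc (k + D)\<close> by (intro mult_right_mono) simp_all
  ultimately show ?thesis by linarith
qed
end

context sub_amply_regular_graph
begin

lemma l_sq_less_card:
  assumes "\<not> disjoint_union_of_cliques V E" and "5 * (real k * m) \<le> l\<^sup>2"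
  shows "l\<^sup>2 < 32 * real (card V)"
proof (rule ccontr)
  assume small: "\<not> l\<^sup>2 < 32 * real (card V)"
  obtain z x y where path: "E z x" "E z y" "x \<noteq> y" "\<not> E x y"
    using assms(1) disjoint_union_of_cliques_if_no_induced_path[of E V, OF sym] by blast
  have "2 * l - m \<le> real k" and "0 \<le> m" using induced_path_bounds[OF path] by simp_all
  have "l \<le> real k" using l_le_k[OF path(1)] .
  have "1 \<le> l" by (simp add: l_def)
  note bounds = gap_if_lambda_large[OF assms(2) \<open>l \<le> real k\<close> \<open>0 \<le> m\<close>]
  interpret sub_amply_regular_gap V E k lam mu
    by unfold_locales (use bounds \<open>0 \<le> m\<close> \<open>1 \<le> l\<close> in linarith)+
  have "z \<in> V" using edge_in_V[OF path(1)] .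
  have "(real k - l) * (7/10 * l)\<^sup>2 \<le> real (card V) * real k"
    using card_V_bound[OF \<open>z \<in> V\<close> \<open>l \<le> real k\<close> _ bounds(3)] \<open>1 \<le> l\<close> by simp
  also have "\<dots> \<le> l\<^sup>2 / 32 * real k"
    using small \<open>l \<le> real k\<close> \<open>1 \<le> l\<close> by (intro mult_right_mono) simp_all
  finally have "((real k - l) * (49/100)) * l\<^sup>2 \<le> (real k / 32) * l\<^sup>2"
    by (simp add: power2_eq_square algebra_simps)
  then have "(real k - l) * (49/100) \<le> real k / 32"
    by (rule mult_right_le_imp_le) (use \<open>1 \<le> l\<close> in simp)
  moreover have "0 < real k" using \<open>l \<le> real k\<close> \<open>1 \<le> l\<close> by linarith
  ultimately show False using \<open>2 * l - m \<le> real k\<close> bounds(1) by (simp add: field_simps)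
qed

end

theorem theorem1:
  fixes V :: "'a set" and E :: "'a \<Rightarrow> 'a \<Rightarrow> bool" and n k lam mu :: nat
  assumes "sub_amply_regular V E n k lam mu"
    and "\<not> disjoint_union_of_cliques V E"
  shows "real lam + 1 < max (4 * sqrt (2 * real n))
            (6 / (sqrt 13 - 1) * sqrt (real k * (real mu - 1)))"
proof -
  interpret sub_amply_regular_graph V E k lam mu
    using assms(1) by (rule sub_amply_regular_graphI)
  have "card V = n" using assms(1) by (simp add: sub_amply_regular_def)
  show ?thesis
  proof (rule ccontr)
    assume "\<not> ?thesis"
    then have "4 * sqrt (2 * real n) \<le> l" and "6 / (sqrt 13 - 1) * sqrt (real k * m) \<le> l"
      by (simp_all add: l_def m_def)
    then have "32 * real n \<le> l\<^sup>2" and "5 * (real k * m) \<le> l\<^sup>2"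
      by (simp_all add: sq_le_if_four_sqrt_le sq_le_if_sqrt13_bound)
    with l_sq_less_card[OF assms(2)] \<open>card V = n\<close> show False by simp
  qed
qed

end
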